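(* Consider rational $c$ for which $f_c(x)=x^2+c$ has a rational $3$-cycle $\{x_1,x_2,x_3\}$ (elements written in lowest terms). (a) Some $x_i$ has numerator equal to one of $\pm11,\pm17,\pm25$ if and only if $c=-\tfrac{421}{144}$. (b) Some $x_i$ has numerator $\pm19$ if and only if $c\in\{-\tfrac{301}{144},\,-\tfrac{337\cdot673}{360^2}\}$. (c) Some $x_i$ has numerator $\pm23$ if and only if $c\in\{-\tfrac{301}{144},\,-\tfrac{43^2}{24^2}\}$.
   Context: A rational $3$-cycle of $f_c$ is the orbit of a rational point of minimal period $3$. Standing fact: $f_c$ has one iff $c=-A(m,n)/B(m,n)$ with $A(m,n)=m^6+2m^5n+4m^4n^2+8m^3n^3+9m^2n^4+4mn^5+n^6$, $B(m,n)=4m^2n^2(m+n)^2$, for coprime integers $m,n$ with $mn(m+n)\ne0$; the cycle is then $\{\frac{t_1}{2mn(m+n)},\frac{t_2}{2mn(m+n)},-\frac{t_3}{2mn(m+n)}\}$ in lowest terms, with $t_1=m^3+2m^2n+mn^2+n^3$, $t_2=m^3-mn^2-n^3$, $t_3=m^3+2m^2n+3mn^2+n^3$. *)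

theory Defs
  imports Complex_Main
begin

definition fc :: "rat \<Rightarrow> rat \<Rightarrow> rat" where
  "fc c x = x ^ 2 + c"

definition period3_pt :: "rat \<Rightarrow> rat \<Rightarrow> bool" where
  "period3_pt c x \<longleftrightarrow> (fc c ^^ 3) x = x \<and> (fc c ^^ 1) x \<noteq> x \<and> (fc c ^^ 2) x \<noteq> x"

definition orbit3 :: "rat \<Rightarrow> rat \<Rightarrow> rat set" where
  "orbit3 c x = {x, fc c x, fc c (fc c x)}"

text \<open>Numerator of a rational in lowest terms (denominator positive).\<close>
definition numer :: "rat \<Rightarrow> int" where
  "numer q = fst (quotient_of q)"

definition cycle_numer_in :: "rat \<Rightarrow> int set \<Rightarrow> bool" where
  "cycle_numer_in c S \<longleftrightarrow> (\<exists>x. period3_pt c x \<and> (\<exists>y\<in>orbit3 c x. numer y \<in> S))"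

end

theory Submission
  imports Defs "HOL-Number_Theory.Cong"
begin

text \<open>
Write x for a point of the cycle and t = x + f_c(x) = m/n in lowest terms. Then x and c are
rational functions of t, and the numerator of x is \<plusminus>F(m,n) with
F(m,n) = m^3 + 2m^2n + mn^2 + n^3, so a prescribed numerator k leads to the Thue equation
F(m,n) = k. F is the norm form of m - n\<theta> in \<int>[\<theta>], where \<theta>^3 + 2\<theta>^2 + \<theta> + 1 = 0; this
is an order in a cubic field with one real embedding, and \<epsilon> = \<theta>^2 + \<theta> is a unit of it.
Hence m - n\<theta> = \<gamma>\<epsilon>^j where \<gamma> has norm k and real embedding in the fundamental domain [1, \<epsilon>);
bounding the coefficients of \<gamma> there leaves a finite search. For each \<gamma> found, the exponents j
for which \<gamma>\<epsilon>^j has vanishing \<theta>^2-coefficient are pinned down by Skolem's p-adic method: modulo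
p the coefficient is periodic in j, and on each residue class it is a p-adically analytic
function of j with at most one zero. Each solution (m,n) finally gives one value of c.
\<close>

section \<open>Parametrisation of rational 3-cycles\<close>

lemma period3_pt_iff:
  "period3_pt c x \<longleftrightarrow> fc c (fc c (fc c x)) = x \<and> fc c x \<noteq> x \<and> fc c (fc c x) \<noteq> x"
  by (simp add: period3_pt_def numeral_3_eq_3 numeral_2_eq_2)

lemma period3_pt_orbit3: "period3_pt c x \<Longrightarrow> y \<in> orbit3 c x \<Longrightarrow> period3_pt c y"
  unfolding period3_pt_iff orbit3_def by (auto; metis)

definition param_x :: "rat \<Rightarrow> rat" where
  "param_x t = (t^3 + 2*t^2 + t + 1) / (2*t*(t + 1))"

definition param_c :: "rat \<Rightarrow> rat" where
  "param_c t = - (t^6 + 2*t^5 + 4*t^4 + 8*t^3 + 9*t^2 + 4*t + 1) / (4*t^2*(t + 1)^2)"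

lemma period3_pt_eq_param_x:
  assumes "period3_pt c x"
  defines "t \<equiv> x + fc c x"
  shows "t \<noteq> 0 \<and> t \<noteq> -1 \<and> x = param_x t"
proof -
  define y z where "y = fc c x" and "z = fc c y"
  have y: "y = x^2 + c" and z: "z = y^2 + c" and x: "x = z^2 + c"
    using assms(1) unfolding y_def z_def period3_pt_iff fc_def by auto
  have "x \<noteq> y" "x \<noteq> z" "y \<noteq> z"
    using assms(1) unfolding y_def z_def period3_pt_iff by metis+
  have t: "t = x + y" unfolding t_def y_def ..
  have zy: "z - y = (y - x) * t" using y z t by (simp add: algebra_simps power2_eq_square)
  have xz: "x - z = (z - y) * (y + z)" using x y z by (simp add: algebra_simps power2_eq_square)
  have t0: "t \<noteq> 0" using zy \<open>y \<noteq> z\<close> by auto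
  have "x - z = (x - y) * (1 + t)" using zy by (simp add: algebra_simps)
  moreover have "x - z = (x - y) * (- t * (y + z))" using xz unfolding zy by (simp add: algebra_simps)
  ultimately have "(x - y) * ((1 + t) - (- t * (y + z))) = 0" by (simp only: right_diff_distrib)
  then have yz: "1 + t = - t * (y + z)" using \<open>x \<noteq> y\<close> by simp
  have t1: "t \<noteq> -1"
  proof
    assume "t = -1"
    then have "y + z = 0" using yz by simp
    then show False using xz \<open>x \<noteq> z\<close> by simp
  qed
  have yt: "y = t - x" using t by simp
  have zt: "z = y + (y - x) * t" using zy by simp
  have "1 + t = - t * (2*t - 2*x + (t - 2*x)*t)"
    using yz unfolding zt yt by (simp add: algebra_simps)
  then have "2 * x * t * (t + 1) = t^3 + 2*t^2 + t + 1"
    by (simp add: algebra_simps power2_eq_square power3_eq_cube)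
  moreover have "2 * t * (t + 1) \<noteq> 0" using t0 t1 by (simp add: add_eq_0_iff)
  ultimately show ?thesis using t0 t1 unfolding param_x_def by (simp add: field_simps)
qed

lemma param_c_eq:
  assumes "t \<noteq> 0" "t \<noteq> -1"
  shows "param_c t = t - param_x t - (param_x t)^2"
proof -
  define N D where "N = t^3 + 2*t^2 + t + 1" and "D = 2*t*(t + 1)"
  have "D \<noteq> 0" unfolding D_def using assms by (simp add: add_eq_0_iff)
  then have "t - N/D - (N/D)^2 = (t*D^2 - N*D - N^2) / D^2"
    by (simp add: field_simps power2_eq_square)
  also have "t*D^2 - N*D - N^2 = - (t^6 + 2*t^5 + 4*t^4 + 8*t^3 + 9*t^2 + 4*t + 1)"
    unfolding N_def D_def by algebra
  also have "D^2 = 4*t^2*(t + 1)^2" unfolding D_def by (simp add: power_mult_distrib)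
  finally show ?thesis unfolding param_c_def param_x_def N_def D_def by simp
qed

lemma period3_pt_eq_param_c:
  assumes "period3_pt c x"
  shows "c = param_c (x + fc c x)"
  using period3_pt_eq_param_x[OF assms] param_c_eq[of "x + fc c x"]
  by (simp add: fc_def)

definition thue_form :: "int \<Rightarrow> int \<Rightarrow> int" where
  "thue_form m n = m^3 + 2*m^2*n + m*n^2 + n^3"

lemma param_x_of_int_div:
  fixes m n :: int
  assumes "m \<noteq> 0" "n \<noteq> 0" "m + n \<noteq> 0"
  shows "param_x (of_int m / of_int n) = of_int (thue_form m n) / of_int (2*m*n*(m + n))"
proof -
  define u v where "u = rat_of_int m" and "v = rat_of_int n"
  have uv: "u \<noteq> 0" "v \<noteq> 0" "u + v \<noteq> 0"
    using assms unfolding u_def v_def by (simp_all flip: of_int_add)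
  have num: "(u/v)^3 + 2*(u/v)^2 + u/v + 1 = (u^3 + 2*u^2*v + u*v^2 + v^3) / v^3"
    using uv by (simp add: field_simps power2_eq_square power3_eq_cube)
  have den: "2*(u/v)*(u/v + 1) = 2*u*(u + v) / v^2"
    using uv by (simp add: field_simps power2_eq_square)
  have "2*u*(u + v) / v^2 \<noteq> 0" "2*u*v*(u + v) \<noteq> 0" using uv by auto
  then have "param_x (u/v) = (u^3 + 2*u^2*v + u*v^2 + v^3) / (2*u*v*(u + v))"
    unfolding param_x_def num den
    by (subst frac_eq_eq) (use uv in \<open>simp_all add: field_simps power2_eq_square power3_eq_cube\<close>)
  then show ?thesis unfolding u_def v_def thue_form_def by simp
qed

lemma numer_of_int_div:
  assumes "b \<noteq> 0" "coprime a b"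
  shows "numer (of_int a / of_int b) \<in> {a, - a}"
proof -
  have "quotient_of (of_int a / of_int b) = Rat.normalize (a, b)"
    by (simp add: Fract_of_int_quotient[symmetric] quotient_of_Fract)
  then show ?thesis using assms unfolding numer_def by (auto simp: Rat.normalize_def Let_def)
qed

lemma coprime_add_mult_self: "coprime a m \<Longrightarrow> coprime (a + m * k) (m :: int)"
  by (metis coprime_commute coprime_iff_gcd_eq_1 gcd_add_mult mult.commute add.commute)

lemma coprime_thue_form:
  assumes "coprime m n"
  shows "coprime (thue_form m n) (2*m*n*(m + n))"
proof -
  have "\<not> (even m \<and> even n)" using assms by (metis coprime_common_divisor odd_one)
  then have "odd (thue_form m n)" unfolding thue_form_def by auto
  then have "coprime (thue_form m n) 2" by (simp add: coprime_commute)
  moreover have "coprime (thue_form m n) m"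
  proof -
    have "thue_form m n = n^3 + m * (m^2 + 2*m*n + n^2)"
      unfolding thue_form_def by (simp add: algebra_simps power2_eq_square power3_eq_cube)
    moreover have "coprime (n^3) m" using assms by (simp add: coprime_commute)
    ultimately show ?thesis by (simp add: coprime_add_mult_self)
  qed
  moreover have "coprime (thue_form m n) n"
  proof -
    have "thue_form m n = m^3 + n * (2*m^2 + m*n + n^2)"
      unfolding thue_form_def by (simp add: algebra_simps power2_eq_square power3_eq_cube)
    moreover have "coprime (m^3) n" using assms by simp
    ultimately show ?thesis by (simp add: coprime_add_mult_self)
  qed
  moreover have "coprime (thue_form m n) (m + n)"
  proof -
    have "thue_form m n = n^3 + (m + n) * (m^2 + m*n)"
      unfolding thue_form_def by (simp add: algebra_simps power2_eq_square power3_eq_cube)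
    moreover have "coprime n (m + n)"
      using coprime_add_mult_self[of m n 1] assms by (simp add: coprime_commute)
    ultimately show ?thesis by (simp add: coprime_add_mult_self)
  qed
  ultimately show ?thesis by simp
qed

lemma numer_param_x:
  assumes "coprime m n" "m \<noteq> 0" "n \<noteq> 0" "m + n \<noteq> 0"
  shows "numer (param_x (of_int m / of_int n)) \<in> {thue_form m n, - thue_form m n}"
  unfolding param_x_of_int_div[OF assms(2-4)]
  by (rule numer_of_int_div) (use assms coprime_thue_form in auto)

section \<open>The ring \<int>[\<theta>]\<close>

text \<open>Zt a b c stands for a + b\<theta> + c\<theta>^2, multiplied using \<theta>^3 = -2\<theta>^2 - \<theta> - 1.\<close>
datatype zt = Zt (cf0: int) (cf1: int) (cf2: int)

instantiation zt :: comm_ring_1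
begin
fun plus_zt where "plus_zt (Zt a b c) (Zt d e f) = Zt (a + d) (b + e) (c + f)"
fun minus_zt where "minus_zt (Zt a b c) (Zt d e f) = Zt (a - d) (b - e) (c - f)"
fun uminus_zt where "uminus_zt (Zt a b c) = Zt (- a) (- b) (- c)"
definition zero_zt where "zero_zt = Zt 0 0 0"
definition one_zt where "one_zt = Zt 1 0 0"
fun times_zt where "times_zt (Zt a b c) (Zt d e f) =
  Zt (a*d - (b*f + c*e) + 2*(c*f)) (a*e + b*d - (b*f + c*e) + c*f)
     (a*f + b*e + c*d - 2*(b*f + c*e) + 3*(c*f))"
instance
proof
  fix x y z :: zt
  show "x * y * z = x * (y * z)" by (cases x; cases y; cases z) (simp add: algebra_simps)
  show "x * y = y * x" by (cases x; cases y) (simp add: algebra_simps)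
  show "1 * x = x" by (cases x) (simp add: one_zt_def)
  show "(x + y) * z = x * z + y * z" by (cases x; cases y; cases z) (simp add: algebra_simps)
  show "x + y + z = x + (y + z)" by (cases x; cases y; cases z) simp
  show "x + y = y + x" by (cases x; cases y) simp
  show "0 + x = x" by (cases x) (simp add: zero_zt_def)
  show "- x + x = 0" by (cases x) (simp add: zero_zt_def)
  show "x - y = x + - y" by (cases x; cases y) simp
  show "(0::zt) \<noteq> 1" by (simp add: zero_zt_def one_zt_def)
qed
end

lemma of_int_zt: "(of_int k :: zt) = Zt k 0 0"
  by (induct k rule: int_induct[where k = 0]) (simp_all add: zero_zt_def one_zt_def)

text \<open>The determinant of multiplication by a + b\<theta> + c\<theta>^2 on the basis 1, \<theta>, \<theta>^2.\<close>
definition zt_norm :: "zt \<Rightarrow> int" where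
  "zt_norm x = (case x of Zt a b c \<Rightarrow> a^3 - 2*a^2*b + 2*a^2*c + a*b^2 + a*b*c - 3*a*c^2
     - b^3 + 2*b^2*c - b*c^2 + c^3)"

lemma zt_norm_linear: "zt_norm (Zt m (- n) 0) = thue_form m n"
  by (simp add: zt_norm_def thue_form_def)

definition eps :: zt where "eps = Zt 0 1 1"
definition eps_inv :: zt where "eps_inv = Zt (-1) (-1) 0"

lemma eps_mult_eps_inv: "eps * eps_inv = 1"
  by (simp add: eps_def eps_inv_def one_zt_def)

lemma zt_norm_mult_eps: "zt_norm (x * eps) = zt_norm x"
  by (cases x) (simp add: zt_norm_def eps_def algebra_simps power2_eq_square power3_eq_cube)

lemma zt_norm_mult_eps_inv: "zt_norm (x * eps_inv) = zt_norm x"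
  by (cases x) (simp add: zt_norm_def eps_inv_def algebra_simps power2_eq_square power3_eq_cube)

definition eps_pow :: "int \<Rightarrow> zt" where
  "eps_pow j = (if 0 \<le> j then eps ^ nat j else eps_inv ^ nat (- j))"

lemma eps_pow_succ: "eps_pow (j + 1) = eps_pow j * eps"
proof (cases "0 \<le> j")
  case True
  then have "nat (j + 1) = Suc (nat j)" by simp
  then show ?thesis using True by (simp add: eps_pow_def mult.commute)
next
  case False
  have "eps_pow j = eps_inv ^ nat (- (j + 1)) * eps_inv"
    using False by (simp add: eps_pow_def power_Suc2[symmetric] Suc_nat_eq_nat_zadd1)
  moreover have "eps_pow (j + 1) = eps_inv ^ nat (- (j + 1))"
    using False by (cases "j = -1") (auto simp add: eps_pow_def)
  ultimately show ?thesis by (simp add: mult.assoc mult.commute[of eps_inv eps] eps_mult_eps_inv)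
qed

lemma eps_pow_pred: "eps_pow (j - 1) = eps_pow j * eps_inv"
  using eps_pow_succ[of "j - 1"] by (simp add: mult.assoc eps_mult_eps_inv)

lemma eps_pow_add: "eps_pow (i + j) = eps_pow i * eps_pow j"
proof (induct i rule: int_induct[where k = 0])
  case base then show ?case by (simp add: eps_pow_def)
next
  case (step1 i)
  have "eps_pow (i + 1 + j) = eps_pow (i + j) * eps" using eps_pow_succ[of "i + j"] by (simp add: ac_simps)
  then show ?case using step1 eps_pow_succ[of i] by (simp add: ac_simps)
next
  case (step2 i)
  have "eps_pow (i - 1 + j) = eps_pow (i + j) * eps_inv"
    using eps_pow_pred[of "i + j"] by (simp add: algebra_simps)
  then show ?case using step2 eps_pow_pred[of i] by (simp add: ac_simps)
qed

lemma eps_pow_of_nat: "eps_pow (int i) = eps ^ i"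
  by (simp add: eps_pow_def)

lemma eps_pow_mult_nonneg: "0 \<le> s \<Longrightarrow> eps_pow (int P * s) = (eps ^ P) ^ nat s"
  by (simp add: eps_pow_def nat_mult_distrib power_mult)

lemma eps_pow_mult_neg: "s < 0 \<Longrightarrow> eps_pow (int P * s) = (eps_inv ^ P) ^ nat (- s)"
proof (cases "P = 0")
  case False
  assume "s < 0"
  then have "\<not> 0 \<le> int P * s" using False by (simp add: mult_pos_neg not_le)
  moreover have "nat (- (int P * s)) = P * nat (- s)"
    by (simp add: nat_mult_distrib flip: mult_minus_right)
  ultimately show ?thesis by (simp add: eps_pow_def power_mult)
qed (simp add: eps_pow_def)

lemma zt_norm_mult_eps_pow: "zt_norm (x * eps_pow j) = zt_norm x"
proof (induct j rule: int_induct[where k = 0])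
  case base then show ?case by (simp add: eps_pow_def)
next
  case (step1 i) then show ?case by (simp add: eps_pow_succ mult.assoc[symmetric] zt_norm_mult_eps)
next
  case (step2 i) then show ?case by (simp add: eps_pow_pred mult.assoc[symmetric] zt_norm_mult_eps_inv)
qed

section \<open>The real embedding and a fundamental domain for \<epsilon>\<close>

lemma theta_root_exists:
  "\<exists>x::real. x^3 + 2*x^2 + x + 1 = 0 \<and> -1755/1000 < x \<and> x < -1754/1000"
proof -
  let ?f = "\<lambda>x::real. x^3 + 2*x^2 + x + 1"
  have lo: "?f (-1755/1000) < 0" and hi: "?f (-1754/1000) > 0"
    by (simp_all add: power3_eq_cube power2_eq_square)
  have "\<exists>x. -1755/1000 \<le> x \<and> x \<le> -1754/1000 \<and> ?f x = 0"
    by (rule IVT') (use lo hi in \<open>auto intro!: continuous_intros\<close>)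
  then obtain x where "-1755/1000 \<le> x" "x \<le> -1754/1000" "?f x = 0" by blast
  moreover have "x \<noteq> -1755/1000" "x \<noteq> -1754/1000" using lo hi \<open>?f x = 0\<close> by auto
  ultimately show ?thesis by (intro exI[of _ x]) auto
qed

definition theta :: real where
  "theta = (SOME x. x^3 + 2*x^2 + x + 1 = 0 \<and> -1755/1000 < x \<and> x < -1754/1000)"

lemma theta: "theta^3 + 2*theta^2 + theta + 1 = 0" "-1755/1000 < theta" "theta < -1754/1000"
  using someI_ex[OF theta_root_exists] unfolding theta_def by auto

lemma theta_sq_bounds: "3076516/1000000 < theta^2" "theta^2 < 3080025/1000000"
proof -
  have "(1754/1000)^2 < (- theta)^2" "(- theta)^2 < (1755/1000)^2"
    using theta(2,3) by (intro power_strict_mono; simp)+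
  then show "3076516/1000000 < theta^2" "theta^2 < 3080025/1000000" by (simp_all add: power_divide)
qed

fun emb :: "zt \<Rightarrow> real" where
  "emb (Zt a b c) = a + b * theta + c * theta^2"

lemma emb_mult: "emb (x * y) = emb x * emb y"
proof (cases x; cases y)
  fix a b c d e f assume xy: "x = Zt a b c" "y = Zt d e f"
  have t3: "theta^3 = - 2*theta^2 - theta - 1" using theta(1) by linarith
  have t4: "theta^4 = 3*theta^2 + theta + 2"
  proof -
    have "theta^4 = theta * theta^3" by (simp add: power_def)
    also have "\<dots> = theta * (- 2*theta^2 - theta - 1)" by (simp only: t3)
    also have "\<dots> = - 2*theta^3 - theta^2 - theta"
      by (simp add: algebra_simps power2_eq_square power3_eq_cube)
    finally show ?thesis unfolding t3 by simp
  qed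
  have "emb x * emb y = a*d + (a*e + b*d)*theta + (a*f + b*e + c*d)*theta^2
      + (b*f + c*e)*theta^3 + c*f*theta^4"
    using xy by (simp add: algebra_simps power2_eq_square power3_eq_cube power4_eq_xxxx)
  then show ?thesis using xy unfolding t4 t3 by (simp add: algebra_simps)
qed

lemma emb_one [simp]: "emb 1 = 1"
  by (simp add: one_zt_def)

lemma emb_power: "emb (x ^ n) = emb x ^ n"
  by (induct n) (simp_all add: emb_mult)

lemma emb_eps_gt_one: "emb eps > 1"
  using theta(2,3) theta_sq_bounds by (simp add: eps_def)

lemma emb_eps_pow: "emb (eps_pow j) = emb eps powr j"
proof (cases "0 \<le> j")
  case True
  then show ?thesis using emb_eps_gt_one by (simp add: eps_pow_def emb_power powr_realpow[symmetric])
next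
  case False
  have "emb eps * emb eps_inv = 1" using arg_cong[OF eps_mult_eps_inv, of emb] by (simp add: emb_mult)
  then have "emb eps_inv = inverse (emb eps)" using emb_eps_gt_one by (simp add: field_simps)
  then show ?thesis using False emb_eps_gt_one
    by (simp add: eps_pow_def emb_power power_inverse powr_realpow[symmetric] powr_minus[symmetric])
qed

text \<open>The product of the two complex embeddings, written as a positive definite quadratic form.\<close>
definition conj_norm :: "zt \<Rightarrow> real" where
  "conj_norm x = (case x of Zt a b c \<Rightarrow>
     (a - c*(theta + 1)^2 - (b - c*(2 + theta)) * (2 + theta)/2)^2
     + (b - c*(2 + theta))^2 * (theta*(3*theta + 4)/4))"

lemma conj_norm_nonneg: "0 \<le> conj_norm x"
proof -
  have "theta*(3*theta + 4)/4 \<ge> 0" using theta(2,3) by (intro divide_nonneg_pos mult_nonpos_nonpos) auto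
  then show ?thesis by (cases x) (simp add: conj_norm_def)
qed

lemma zt_norm_eq_emb_mult_conj_norm: "real_of_int (zt_norm x) = emb x * conj_norm x"
proof (cases x)
  case (Zt a b c)
  have "(a::real)^3 - 2*a^2*b + 2*a^2*c + a*b^2 + a*b*c - 3*a*c^2 - b^3 + 2*b^2*c - b*c^2 + c^3
    - (a + b*r + c*r^2) * ((a - c*(r + 1)^2 - (b - c*(2 + r)) * (2 + r)/2)^2
                          + (b - c*(2 + r))^2 * (r*(3*r + 4)/4))
    = (r^3 + 2*r^2 + r + 1) * (3*a*b*c - 4*a*c^2 - b^3 + 2*b^2*c - b*c^2 - c^3*r^3 - 2*c^3*r^2
        - c^3*r + c^3)" for a b c r
    by (simp add: field_simps power2_eq_square power3_eq_cube)
  from this[of a b c theta] show ?thesis using theta(1) unfolding Zt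
    by (simp add: zt_norm_def conj_norm_def)
qed

lemma conj_norm_le_zt_norm: "1 \<le> emb x \<Longrightarrow> conj_norm x \<le> zt_norm x"
  using mult_right_mono[of 1 "emb x" "conj_norm x"] conj_norm_nonneg zt_norm_eq_emb_mult_conj_norm[of x]
  by simp

lemma coeffs_bounded_in_fundamental_domain:
  assumes "1 \<le> emb (Zt a b c)" "emb (Zt a b c) < emb eps" "zt_norm (Zt a b c) \<le> 25"
  shows "\<bar>b\<bar> \<le> 7 \<and> \<bar>c\<bar> \<le> 5"
proof -
  define Y where "Y = b - c*(2 + theta)"
  define X where "X = a - c*(theta + 1)^2 - Y * (2 + theta)/2"
  define w where "w = theta*(3*theta + 4)/4"
  define E where "E = emb (Zt a b c)"
  have w: "w \<ge> 11/20"
    unfolding w_def using theta(2,3) theta_sq_bounds by (simp add: algebra_simps power2_eq_square)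
  have q: "conj_norm (Zt a b c) = X^2 + Y^2 * w" unfolding conj_norm_def X_def Y_def w_def by simp
  have q25: "X^2 + Y^2 * w \<le> 25"
    using conj_norm_le_zt_norm[OF assms(1)] assms(3) unfolding q by linarith
  have "Y^2 * (11/20) \<le> Y^2 * w" using w by (intro mult_left_mono) auto
  moreover have "0 \<le> X^2" by simp
  moreover have "((27/4)::real)^2 = 729/16" by (simp add: power2_eq_square)
  ultimately have "Y^2 \<le> (27/4)^2" using q25 by linarith
  then have Yb: "\<bar>Y\<bar> \<le> 27/4" using abs_le_square_iff[of Y "27/4"] by simp
  have "0 \<le> Y^2 * w" using w by simp
  then have "X^2 \<le> 5^2" using q25 by simp
  then have Xb: "\<bar>X\<bar> \<le> 5" using abs_le_square_iff[of X 5] by simp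
  have Eb: "\<bar>E\<bar> \<le> 133/100"
    using assms(1,2) theta(2,3) theta_sq_bounds unfolding E_def by (simp add: eps_def)
  \<comment> \<open>solve the triangular system E, X, Y for c, then for b\<close>
  have "c * (3*theta^2 + 4*theta + 1) = (E - X) - Y * (3*theta + 2)/2"
    unfolding E_def X_def Y_def by (simp add: field_simps power2_eq_square)
  moreover have "\<bar>Y * (3*theta + 2)/2\<bar> \<le> 27/4 * (653/400)"
  proof -
    have "\<bar>(3*theta + 2)/2\<bar> \<le> 653/400" using theta(2,3) by simp
    then show ?thesis using Yb unfolding abs_mult times_divide_eq_right[symmetric]
      by (intro mult_mono) auto
  qed
  moreover have "\<bar>real_of_int c\<bar> * (16/5) \<le> \<bar>c * (3*theta^2 + 4*theta + 1)\<bar>"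
    unfolding abs_mult using theta(2,3) theta_sq_bounds by (intro mult_left_mono) auto
  ultimately have "\<bar>real_of_int c\<bar> * (16/5) \<le> 133/100 + 5 + 27/4 * (653/400)"
    using Eb Xb by linarith
  then have cb: "\<bar>c\<bar> \<le> 5" by linarith
  have "\<bar>c*(2 + theta)\<bar> \<le> 5 * (246/1000)"
    unfolding abs_mult using cb theta(2,3) by (intro mult_mono) auto
  then have "\<bar>real_of_int b\<bar> < 8" using Yb unfolding Y_def by linarith
  then show ?thesis using cb by linarith
qed

lemma mult_le_max_mult_endpoints:
  fixes c y :: "'a :: linordered_idom"
  assumes "lo \<le> y" "y \<le> hi"
  shows "c * y \<le> max (c * lo) (c * hi)"
proof (cases "c \<ge> 0")
  case True
  then show ?thesis using assms(2) by (simp add: mult_left_mono le_max_iff_disj)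
next
  case False
  then show ?thesis using assms(1) by (simp add: mult_left_mono_neg le_max_iff_disj)
qed

text \<open>An upper bound for 10^6 (b\<theta> + c\<theta>^2), from the bounds on \<theta> and \<theta>^2.\<close>
definition quad_ub :: "int \<Rightarrow> int \<Rightarrow> int" where
  "quad_ub b c = max (b * -1755000) (b * -1754000) + max (c * 3076516) (c * 3080025)"

lemma quad_ub: "real_of_int b * theta + real_of_int c * theta^2 \<le> quad_ub b c / 10^6"
proof -
  have "real_of_int b * (10^6 * theta) \<le> max (of_int b * -1755000) (of_int b * -1754000)"
    using theta(2,3) by (intro mult_le_max_mult_endpoints) auto
  moreover have "real_of_int c * (10^6 * theta^2) \<le> max (of_int c * 3076516) (of_int c * 3080025)"
    using theta_sq_bounds by (intro mult_le_max_mult_endpoints) auto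
  ultimately show ?thesis by (simp add: quad_ub_def of_int_max field_simps)
qed

definition thue_rhs :: "int list" where
  "thue_rhs = [11, 17, 19, 23, 25]"

definition thue_reps :: "zt list" where
  "thue_reps = [Zt 3 1 0, Zt 2 (-3) (-2), Zt (-1) 4 3, Zt (-2) (-7) (-3), Zt (-4) (-3) 0, Zt 5 4 1,
    Zt 1 7 4]"

lemma thue_reps_complete_table:
  "\<forall>b \<in> set [-7..7]. \<forall>c \<in> set [-5..5].
     \<forall>a \<in> set [- ((quad_ub b c - 10^6) div 10^6)..(quad_ub (1 - b) (1 - c) - 1) div 10^6].
       zt_norm (Zt a b c) \<in> set thue_rhs \<longrightarrow> Zt a b c \<in> set thue_reps"
  by code_simp

lemma thue_reps_complete:
  assumes "\<bar>b\<bar> \<le> 7" "\<bar>c\<bar> \<le> 5" "1 \<le> emb (Zt a b c)" "emb (Zt a b c) < emb eps"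
    and "zt_norm (Zt a b c) \<in> set thue_rhs"
  shows "Zt a b c \<in> set thue_reps"
proof -
  have "1 - real_of_int a \<le> quad_ub b c / 10^6" using assms(3) quad_ub[of b c] by simp
  then have "real_of_int (- a) \<le> real_of_int (quad_ub b c - 10^6) / real_of_int (10^6)"
    by (simp add: field_simps)
  then have lo: "- a \<le> (quad_ub b c - 10^6) div 10^6"
    by (subst floor_divide_of_int_eq[where 'a = real, symmetric]) (rule le_floor_iff[THEN iffD2])
  have "real_of_int a < quad_ub (1 - b) (1 - c) / 10^6"
    using assms(4) quad_ub[of "1 - b" "1 - c"] by (simp add: eps_def algebra_simps)
  then have "real_of_int (10^6 * a) < real_of_int (quad_ub (1 - b) (1 - c))" by (simp add: field_simps)
  then have "real_of_int a \<le> real_of_int (quad_ub (1 - b) (1 - c) - 1) / real_of_int (10^6)"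
    unfolding of_int_less_iff by (simp add: field_simps)
  then have hi: "a \<le> (quad_ub (1 - b) (1 - c) - 1) div 10^6"
    by (subst floor_divide_of_int_eq[where 'a = real, symmetric]) (rule le_floor_iff[THEN iffD2])
  have "a \<in> set [- ((quad_ub b c - 10^6) div 10^6)..(quad_ub (1 - b) (1 - c) - 1) div 10^6]"
    unfolding set_upto atLeastAtMost_iff using lo hi by (intro conjI) linarith+
  moreover have "b \<in> set [-7..7]" "c \<in> set [-5..5]" using assms(1,2) by auto
  ultimately show ?thesis using thue_reps_complete_table assms(5) by blast
qed

lemma ex_thue_rep_mult_eps_pow:
  assumes "zt_norm \<beta> \<in> set thue_rhs"
  shows "\<exists>\<gamma> \<in> set thue_reps. \<exists>j. \<beta> = \<gamma> * eps_pow j"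
proof -
  define r where "r = emb eps"
  have r: "r > 1" unfolding r_def by (rule emb_eps_gt_one)
  have norm_pos: "0 < zt_norm \<beta>" "zt_norm \<beta> \<le> 25" using assms by (auto simp: thue_rhs_def)
  then have "0 < emb \<beta> * conj_norm \<beta>" using zt_norm_eq_emb_mult_conj_norm[of \<beta>] by simp
  then have pos: "0 < emb \<beta>" using conj_norm_nonneg[of \<beta>] by (simp add: zero_less_mult_iff)
  \<comment> \<open>shift \<beta> by the power of \<epsilon> that moves its real embedding into [1, \<epsilon>)\<close>
  define j where "j = \<lfloor>log r (emb \<beta>)\<rfloor>"
  have "r powr j \<le> r powr (log r (emb \<beta>))" using r by (intro powr_mono) (auto simp: j_def)
  then have lo: "r powr j \<le> emb \<beta>" using pos r by simp
  have "r powr (log r (emb \<beta>)) < r powr (j + 1)" using r by (intro powr_less_mono) (auto simp: j_def)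
  then have hi: "emb \<beta> < r powr j * r" using pos r by (simp add: powr_add)
  define \<gamma> where "\<gamma> = \<beta> * eps_pow (- j)"
  have emb_\<gamma>: "emb \<gamma> = emb \<beta> / r powr j"
    unfolding \<gamma>_def using r by (simp add: emb_mult emb_eps_pow r_def[symmetric] powr_minus_divide)
  have "0 < r powr j" using r by simp
  then have "1 \<le> emb \<gamma>" "emb \<gamma> < emb eps"
    unfolding emb_\<gamma> using lo hi by (simp_all add: field_simps r_def)
  moreover have norm_\<gamma>: "zt_norm \<gamma> = zt_norm \<beta>" unfolding \<gamma>_def by (rule zt_norm_mult_eps_pow)
  moreover obtain a b c where abc: "\<gamma> = Zt a b c" by (cases \<gamma>)
  ultimately have "\<bar>b\<bar> \<le> 7 \<and> \<bar>c\<bar> \<le> 5"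
    using coeffs_bounded_in_fundamental_domain norm_pos by auto
  then have "\<gamma> \<in> set thue_reps"
    using thue_reps_complete \<open>1 \<le> emb \<gamma>\<close> \<open>emb \<gamma> < emb eps\<close> norm_\<gamma> assms abc by auto
  moreover have "\<beta> = \<gamma> * eps_pow j"
    unfolding \<gamma>_def using eps_pow_add[of "- j" j] by (simp add: mult.assoc eps_pow_def)
  ultimately show ?thesis by blast
qed

section \<open>Skolem's p-adic method\<close>

lemma add_two_le_three_power: "1 \<le> f \<Longrightarrow> f + 2 \<le> (3::nat) ^ f"
proof (induct f)
  case (Suc f) then show ?case by (cases "f = 0") auto
qed simp

lemma prime_power_dvd_binomial_mult_power:
  fixes p n i :: nat
  assumes p: "prime p" "p \<ge> 3" and i: "2 \<le> i" "i \<le> n"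
  shows "p ^ (multiplicity p n + 2) dvd (n choose i) * p ^ i"
proof -
  define e where "e = multiplicity p n"
  define f where "f = multiplicity p i"
  have nu: "\<not> is_unit p" using p by auto
  have i0: "i \<noteq> 0" using i by auto
  obtain i' where i': "i = p ^ f * i'" "\<not> p dvd i'"
    using multiplicity_decompose'[OF i0 nu] f_def by metis
  have "p ^ e dvd n" unfolding e_def by (rule multiplicity_dvd)
  moreover have "i * (n choose i) = n * ((n - 1) choose (i - 1))"
    using times_binomial_minus1_eq[of i n] i by simp
  ultimately have pe: "p ^ e dvd p ^ f * ((n choose i) * i')" using i' by (simp add: ac_simps)
  have fi: "f + 2 \<le> i"
  proof (cases "f = 0")
    case False
    have "f + 2 \<le> 3 ^ f" using add_two_le_three_power False by simp
    also have "(3::nat) ^ f \<le> p ^ f" using p by (simp add: power_mono)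
    also have "p ^ f \<le> i" using i' i0 by (metis dvd_imp_le dvd_triv_left neq0_conv)
    finally show ?thesis .
  qed (use i in simp)
  show ?thesis
  proof (cases "e \<le> f")
    case True
    have "p ^ (e + 2) dvd p ^ i" using fi True by (intro le_imp_power_dvd) simp
    then show ?thesis unfolding e_def by simp
  next
    case False
    then have "p ^ f * p ^ (e - f) dvd p ^ f * ((n choose i) * i')"
      using pe by (simp add: power_add[symmetric])
    then have "p ^ (e - f) dvd (n choose i) * i'" using p by (simp add: prime_gt_0_nat)
    moreover have "coprime (p ^ (e - f)) i'" using i'(2) p(1) by (simp add: prime_imp_coprime)
    ultimately have "p ^ (e - f) dvd (n choose i)" using coprime_dvd_mult_left_iff by blast
    moreover have "p ^ (e + 2) dvd p ^ (e - f + i)" using fi False by (intro le_imp_power_dvd) simp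
    ultimately show ?thesis unfolding e_def by (simp add: power_add mult_dvd_mono dvd_trans)
  qed
qed

lemma cf2_add [simp]: "cf2 (x + y) = cf2 x + cf2 y"
  by (cases x; cases y) simp

lemma cf2_zero [simp]: "cf2 0 = 0"
  by (simp add: zero_zt_def)

lemma cf2_of_int_mult [simp]: "cf2 (of_int k * x) = k * cf2 x"
  by (cases x) (simp add: of_int_zt)

lemma cf2_of_nat_mult [simp]: "cf2 (of_nat k * x) = int k * cf2 x"
  using cf2_of_int_mult[of "int k" x] by simp

lemma cf2_mult_of_nat_mult [simp]: "cf2 (x * (of_nat k * y)) = int k * cf2 (x * y)"
  by (subst mult.left_commute) (rule cf2_of_nat_mult)

lemma cf2_sum: "cf2 (sum g A) = (\<Sum>a\<in>A. cf2 (g a))"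
  by (induct A rule: infinite_finite_induct) auto

lemma one_plus_mult_power: "\<exists>w. (1 + of_nat p * d :: zt) ^ n = 1 + of_nat p * w"
proof (induct n)
  case (Suc n)
  then obtain w where "(1 + of_nat p * d :: zt) ^ n = 1 + of_nat p * w" by blast
  then show ?case by (intro exI[of _ "w + d + of_nat p * w * d"]) (simp add: algebra_simps)
qed (auto intro: exI[of _ 0])

lemma cf2_mult_one_plus_mult_power_mod:
  "cf2 (v * (1 + of_nat p * d) ^ n) mod int p = cf2 v mod int p"
proof -
  obtain w where "(1 + of_nat p * d :: zt) ^ n = 1 + of_nat p * w" using one_plus_mult_power by blast
  then have "v * (1 + of_nat p * d) ^ n = v + of_nat p * (v * w)"
    by (simp add: algebra_simps)
  then have "cf2 (v * (1 + of_nat p * d) ^ n) = cf2 v + int p * cf2 (v * w)" by simp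
  then show ?thesis by simp
qed

text \<open>
Expanding binomially, cf2 (v (1 + pd)^n) = \<Sum>i. (n choose i) p^i cf2 (v d^i): the
term i = 1 has p-adic valuation exactly v_p(n) + 1, all terms with i \<ge> 2 have valuation at least
v_p(n) + 2, and the term i = 0 vanishes.
\<close>
lemma cf2_mult_one_plus_mult_power_nonzero:
  fixes p n :: nat
  assumes p: "prime p" "p \<ge> 3" and "cf2 v = 0" "\<not> int p dvd cf2 (v * d)" "n \<ge> 1"
  shows "cf2 (v * (1 + of_nat p * d) ^ n) \<noteq> 0"
proof
  assume zero: "cf2 (v * (1 + of_nat p * d) ^ n) = 0"
  define T where "T i = int ((n choose i) * p ^ i) * cf2 (v * d ^ i)" for i
  have "(1 + of_nat p * d :: zt) ^ n = (of_nat p * d + 1) ^ n" by (simp add: add.commute)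
  also have "\<dots> = (\<Sum>i\<le>n. of_nat (n choose i) * (of_nat p * d) ^ i)" by (simp add: binomial_ring)
  finally have "cf2 (v * (1 + of_nat p * d) ^ n) = (\<Sum>i\<le>n. T i)"
    by (simp add: sum_distrib_left cf2_sum T_def power_mult_distrib mult.assoc
        of_nat_power[symmetric] del: of_nat_power)
  moreover have "{..n} = {0, 1} \<union> {2..n}" using assms(5) by auto
  then have "(\<Sum>i\<le>n. T i) = T 0 + T 1 + (\<Sum>i\<in>{2..n}. T i)" by (simp add: sum.union_disjoint)
  moreover have "T 0 = 0" using assms(3) by (simp add: T_def)
  ultimately have T1: "T 1 = - (\<Sum>i\<in>{2..n}. T i)" using zero by simp
  define e where "e = multiplicity p n"
  have "int p ^ (e + 2) dvd (\<Sum>i\<in>{2..n}. T i)"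
  proof (rule dvd_sum)
    fix i assume "i \<in> {2..n}"
    then have "p ^ (e + 2) dvd (n choose i) * p ^ i"
      unfolding e_def using prime_power_dvd_binomial_mult_power[OF p] by auto
    then show "int p ^ (e + 2) dvd T i" unfolding T_def by (metis dvd_mult2 of_nat_dvd_iff of_nat_power)
  qed
  with T1 have D: "int p ^ (e + 2) dvd T 1" by simp
  obtain n' where n': "n = p ^ e * n'" "\<not> p dvd n'"
    using multiplicity_decompose'[of n p] p assms(5) e_def by (metis not_one_le_zero not_prime_unit)
  have "T 1 = int p ^ (e + 1) * (int n' * cf2 (v * d))" unfolding T_def using n' by simp
  with D have "int p ^ (e + 1) * int p dvd int p ^ (e + 1) * (int n' * cf2 (v * d))" by simp
  then have "int p dvd int n' * cf2 (v * d)" using p by (simp add: prime_gt_0_nat)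
  moreover have "prime (int p)" using p by simp
  ultimately have "int p dvd int n' \<or> int p dvd cf2 (v * d)" by (simp add: prime_dvd_mult_iff)
  with n' assms(4) show False by (simp add: int_dvd_int_iff)
qed

definition zt_mod :: "int \<Rightarrow> zt \<Rightarrow> zt" where
  "zt_mod q x = Zt (cf0 x mod q) (cf1 x mod q) (cf2 x mod q)"

lemma cf2_zt_mod [simp]: "cf2 (zt_mod q x) = cf2 x mod q"
  by (simp add: zt_mod_def)

lemma zt_mod_mult_left: "zt_mod q (zt_mod q x * y) = zt_mod q (x * y)"
proof -
  have mod_cong: "[(a::int) mod q = a] (mod q)" for a by (simp add: cong_def)
  show ?thesis
    by (cases x; cases y)
      (simp add: zt_mod_def flip: cong_def; intro conjI cong_add cong_diff cong_mult cong_refl mod_cong)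
qed

fun eps_orbit_mod :: "int \<Rightarrow> zt \<Rightarrow> nat \<Rightarrow> zt list" where
  "eps_orbit_mod q x 0 = []"
| "eps_orbit_mod q x (Suc n) = x # eps_orbit_mod q (zt_mod q (x * eps)) n"

lemma length_eps_orbit_mod [simp]: "length (eps_orbit_mod q x n) = n"
  by (induct n arbitrary: x) auto

lemma nth_eps_orbit_mod: "i < n \<Longrightarrow> eps_orbit_mod q (zt_mod q g) n ! i = zt_mod q (g * eps ^ i)"
proof (induct n arbitrary: g i)
  case (Suc n)
  then show ?case
    by (cases i) (simp_all add: zt_mod_mult_left mult.assoc)
qed simp

definition skolem_check :: "nat \<Rightarrow> nat \<Rightarrow> nat \<Rightarrow> int list \<Rightarrow> zt \<Rightarrow> nat \<Rightarrow> bool" where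
  "skolem_check p q P zs g M = list_all (\<lambda>(i, x). cf2 x mod int p \<noteq> 0 \<or> cf2 x mod int q \<noteq> 0
       \<or> (\<exists>z\<in>set zs. z mod int P = int i mod int P))
     (zip [0..<M] (eps_orbit_mod (int (p*q)) (zt_mod (int (p*q)) g) M))"

lemma cf2_mult_eps_pow_mod:
  assumes "eps ^ M = 1 + of_nat m * d" "eps_inv ^ M = 1 + of_nat m * d'"
  shows "cf2 (g * eps_pow (int i + int M * s)) mod int m = cf2 (g * eps ^ i) mod int m"
  using assms
  by (cases "0 \<le> s") (simp_all add: eps_pow_add eps_pow_of_nat eps_pow_mult_nonneg eps_pow_mult_neg
      mult.assoc[symmetric] cf2_mult_one_plus_mult_power_mod)

lemma cf2_mult_eps_pow_period_nonzero:
  assumes p: "prime p" "p \<ge> 3"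
    and eps_P: "eps ^ P = 1 + of_nat p * d" "eps_inv ^ P = 1 + of_nat p * d'"
    and z: "cf2 (g * eps_pow z) = 0" "\<not> int p dvd cf2 (g * eps_pow z * d)"
      "\<not> int p dvd cf2 (g * eps_pow z * d')"
    and "s \<noteq> 0"
  shows "cf2 (g * eps_pow (z + int P * s)) \<noteq> 0"
proof (cases "s > 0")
  case True
  then have "g * eps_pow (z + int P * s) = g * eps_pow z * (1 + of_nat p * d) ^ nat s"
    using eps_P by (simp add: eps_pow_add eps_pow_mult_nonneg mult.assoc)
  moreover have "cf2 (g * eps_pow z * (1 + of_nat p * d) ^ nat s) \<noteq> 0"
    using True z by (intro cf2_mult_one_plus_mult_power_nonzero[OF p]) (auto simp: mult.assoc)
  ultimately show ?thesis by simp
next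
  case False
  then have "g * eps_pow (z + int P * s) = g * eps_pow z * (1 + of_nat p * d') ^ nat (- s)"
    using \<open>s \<noteq> 0\<close> eps_P by (simp add: eps_pow_add eps_pow_mult_neg mult.assoc)
  moreover have "cf2 (g * eps_pow z * (1 + of_nat p * d') ^ nat (- s)) \<noteq> 0"
    using False \<open>s \<noteq> 0\<close> z by (intro cf2_mult_one_plus_mult_power_nonzero[OF p]) (auto simp: mult.assoc)
  ultimately show ?thesis by simp
qed

lemma skolem_check_residue:
  assumes zero: "cf2 (g * eps_pow j) = 0"
    and M: "M > 0" "P dvd M"
    and eps_M: "eps ^ M = 1 + of_nat (p*q) * dM" "eps_inv ^ M = 1 + of_nat (p*q) * dM'"
    and check: "skolem_check p q P zs g M"
  shows "\<exists>z\<in>set zs. z mod int P = j mod int P"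
proof -
  define i where "i = nat (j mod int M)"
  have j: "j = int i + int M * (j div int M)" and "i < M"
    using M unfolding i_def by (simp_all add: nat_less_iff)
  have "cf2 (g * eps ^ i) mod int (p*q) = 0"
    using cf2_mult_eps_pow_mod[OF eps_M, of g i "j div int M"] zero j by simp
  moreover have "(i, eps_orbit_mod (int (p*q)) (zt_mod (int (p*q)) g) M ! i)
      \<in> set (zip [0..<M] (eps_orbit_mod (int (p*q)) (zt_mod (int (p*q)) g) M))"
    using \<open>i < M\<close> by (auto simp: in_set_zip intro!: exI[of _ i])
  ultimately obtain z where "z \<in> set zs" "z mod int P = int i mod int P"
    using check \<open>i < M\<close> unfolding skolem_check_def list_all_iff
    by (fastforce simp: nth_eps_orbit_mod mod_mod_cancel)
  moreover have "int i mod int P = j mod int P"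
    using M unfolding i_def by (simp add: mod_mod_cancel)
  ultimately show ?thesis by auto
qed

text \<open>
The certificates d, d' give \<epsilon>^P \<equiv> 1 (mod p) and \<epsilon>^M \<equiv> 1 (mod pq). By the check, a zero j of
j \<mapsto> cf2 (g\<epsilon>^j) is congruent modulo P to some z in zs; writing j = z + Ps, Skolem's lemma
applied to g\<epsilon>^z and \<epsilon>^(\<plusminus>P) forces s = 0.
\<close>
lemma skolem_zeros:
  fixes p q P M :: nat
  assumes zero: "cf2 (g * eps_pow j) = 0"
    and p: "prime p" "p \<ge> 3" and M: "M > 0" "P dvd M"
    and eps_P: "eps ^ P = 1 + of_nat p * d" "eps_inv ^ P = 1 + of_nat p * d'"
    and eps_M: "eps ^ M = 1 + of_nat (p*q) * dM" "eps_inv ^ M = 1 + of_nat (p*q) * dM'"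
    and zs: "list_all (\<lambda>z. cf2 (g * eps_pow z) = 0 \<and> \<not> int p dvd cf2 (g * eps_pow z * d)
                      \<and> \<not> int p dvd cf2 (g * eps_pow z * d')) zs"
    and check: "skolem_check p q P zs g M"
  shows "j \<in> set zs"
proof -
  obtain z where z: "z \<in> set zs" "z mod int P = j mod int P"
    using skolem_check_residue[OF zero M eps_M check] by blast
  then obtain s where s: "j = z + int P * s"
    by (metis mod_eqE add.commute mult.commute)
  have "s = 0"
  proof (rule ccontr)
    assume "s \<noteq> 0"
    moreover have "cf2 (g * eps_pow z) = 0" "\<not> int p dvd cf2 (g * eps_pow z * d)"
      "\<not> int p dvd cf2 (g * eps_pow z * d')"
      using zs z(1) unfolding list_all_iff by auto
    ultimately show False
      using cf2_mult_eps_pow_period_nonzero[OF p eps_P] zero unfolding s by blast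
  qed
  then show ?thesis using s z by simp
qed

section \<open>Solving the Thue equations\<close>

definition thue_exponents :: "(zt \<times> int) list" where
  "thue_exponents = [(Zt 3 1 0, 0), (Zt 2 (-3) (-2), 5), (Zt (-1) 4 3, -6), (Zt (-1) 4 3, 4),
    (Zt (-2) (-7) (-3), 5), (Zt (-4) (-3) 0, 0), (Zt 5 4 1, 4)]"

text \<open>The auxiliary primes p, q, the periods P dividing M and the quotients d, d', dM, dM' with
\<epsilon>^(\<plusminus>P) = 1 + pd, 1 + pd' and \<epsilon>^(\<plusminus>M) = 1 + pq dM, 1 + pq dM' were found by a search; each is
only checked here. The suffix of a lemma name is the norm of the representative.\<close>
lemma thue_rep_zeros_11: "cf2 (Zt 3 1 0 * eps_pow j) = 0 \<Longrightarrow> j \<in> set [0]"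
  by (rule skolem_zeros[where p=5 and q=11 and P=24 and M=120
      and d="Zt 30 13 53" and d'="Zt (-5) (-8) (-3)"
      and dM="Zt 1453593716775 625277450215 2550879149365"
      and dM'="Zt (-222400) 233035 205010"]) (assumption | code_simp)+

lemma thue_rep_zeros_17: "cf2 (Zt 2 (-3) (-2) * eps_pow j) = 0 \<Longrightarrow> j \<in> set [5]"
  by (rule skolem_zeros[where p=5 and q=7 and P=24 and M=48
      and d="Zt 30 13 53" and d'="Zt (-5) (-8) (-3)"
      and dM="Zt 3680 1583 6458"
      and dM'="Zt (-5) 27 17"]) (assumption | code_simp)+

lemma thue_rep_zeros_19: "cf2 (Zt (-1) 4 3 * eps_pow j) = 0 \<Longrightarrow> j \<in> set [-6, 4]"
  by (rule skolem_zeros[where p=11 and q=19 and P=120 and M=360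
      and d="Zt 7267968583875 3126387251075 12754395746825" and d'="Zt (-1112000) 1165175 1025050"
      and dM="Zt 78033496397745478431935623506978040337750 33566866102858653725837343809621687431025 136939240047545291455361768979724632160025"
      and dM'="Zt 4572363378241540375 62794075986981444600 34297866037412096225"]) (assumption | code_simp)+

lemma thue_rep_zeros_23a: "cf2 (Zt (-2) (-7) (-3) * eps_pow j) = 0 \<Longrightarrow> j \<in> set [5]"
  by (rule skolem_zeros[where p=5 and q=7 and P=24 and M=48
      and d="Zt 30 13 53" and d'="Zt (-5) (-8) (-3)"
      and dM="Zt 3680 1583 6458"
      and dM'="Zt (-5) 27 17"]) (assumption | code_simp)+

lemma thue_rep_zeros_23b: "cf2 (Zt (-4) (-3) 0 * eps_pow j) = 0 \<Longrightarrow> j \<in> set [0]"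
  by (rule skolem_zeros[where p=5 and q=19 and P=24 and M=360
      and d="Zt 30 13 53" and d'="Zt (-5) (-8) (-3)"
      and dM="Zt 171673692075040052550258371715351688743050 73847105426289038196842156381167712348255 301266328104599641201795891755394190752055"
      and dM'="Zt 10059199432131388825 138146967171359178120 75455305282306611695"]) (assumption | code_simp)+

lemma thue_rep_zeros_25a: "cf2 (Zt 5 4 1 * eps_pow j) = 0 \<Longrightarrow> j \<in> set [4]"
  by (rule skolem_zeros[where p=5 and q=7 and P=24 and M=48
      and d="Zt 30 13 53" and d'="Zt (-5) (-8) (-3)"
      and dM="Zt 3680 1583 6458"
      and dM'="Zt (-5) 27 17"]) (assumption | code_simp)+

lemma thue_rep_zeros_25b: "cf2 (Zt 1 7 4 * eps_pow j) = 0 \<Longrightarrow> j \<in> set []"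
  by (rule skolem_zeros[where p=3 and q=5 and P=13 and M=312
      and d="Zt 2 1 4" and d'="Zt 1 (-1) (-1)"
      and dM="Zt 1494210446415968373780435428956423305 642749130817961879030175585919981128 2622156541087883544030790178360803263"
      and dM'="Zt 462770137275289770 (-397564083303762513) (-376817806570093113)"]) (assumption | code_simp)+

lemma thue_rep_exponents:
  assumes "\<gamma> \<in> set thue_reps" "cf2 (\<gamma> * eps_pow j) = 0"
  shows "(\<gamma>, j) \<in> set thue_exponents"
proof -
  consider "\<gamma> = Zt 3 1 0" | "\<gamma> = Zt 2 (-3) (-2)" | "\<gamma> = Zt (-1) 4 3" | "\<gamma> = Zt (-2) (-7) (-3)"
    | "\<gamma> = Zt (-4) (-3) 0" | "\<gamma> = Zt 5 4 1" | "\<gamma> = Zt 1 7 4"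
    using assms(1) unfolding thue_reps_def by force
  then show ?thesis
  proof cases
    case 1 then show ?thesis using assms(2) thue_rep_zeros_11[of j] by (simp add: thue_exponents_def)
  next
    case 2 then show ?thesis using assms(2) thue_rep_zeros_17[of j] by (simp add: thue_exponents_def)
  next
    case 3 then show ?thesis using assms(2) thue_rep_zeros_19[of j] by (auto simp: thue_exponents_def)
  next
    case 4 then show ?thesis using assms(2) thue_rep_zeros_23a[of j] by (simp add: thue_exponents_def)
  next
    case 5 then show ?thesis using assms(2) thue_rep_zeros_23b[of j] by (simp add: thue_exponents_def)
  next
    case 6 then show ?thesis using assms(2) thue_rep_zeros_25a[of j] by (simp add: thue_exponents_def)
  next
    case 7 then show ?thesis using assms(2) thue_rep_zeros_25b[of j] by simp
  qed
qed

definition thue_sols :: "(int \<times> int) list" where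
  "thue_sols = [(3, -1), (1, 2), (2, 1), (9, -5), (-4, 3), (-1, 3), (-2, 3)]"

lemma thue_exponents_values:
  "(\<lambda>(\<gamma>, j). \<gamma> * eps_pow j) ` set thue_exponents = (\<lambda>(m, n). Zt m (- n) 0) ` set thue_sols"
  by code_simp

lemma thue_solutions:
  assumes "thue_form m n \<in> set thue_rhs"
  shows "(m, n) \<in> set thue_sols"
proof -
  obtain \<gamma> j where \<gamma>: "\<gamma> \<in> set thue_reps" and eq: "Zt m (- n) 0 = \<gamma> * eps_pow j"
    using ex_thue_rep_mult_eps_pow[of "Zt m (- n) 0"] assms by (auto simp: zt_norm_linear)
  have "cf2 (\<gamma> * eps_pow j) = 0" unfolding eq[symmetric] by simp
  with \<gamma> have "(\<gamma>, j) \<in> set thue_exponents" by (rule thue_rep_exponents)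
  then have "Zt m (- n) 0 \<in> (\<lambda>(m, n). Zt m (- n) 0) ` set thue_sols"
    unfolding eq thue_exponents_values[symmetric] by force
  then show ?thesis by auto
qed

section \<open>The values of c\<close>

definition cycle_numer_table :: "(int \<times> rat) set" where
  "cycle_numer_table = {(11, - 421 / 144), (17, - 421 / 144), (25, - 421 / 144), (19, - 301 / 144),
    (19, - (337 * 673) / (360 ^ 2)), (23, - 301 / 144), (23, - (43 ^ 2) / (24 ^ 2))}"

lemma cycle_numer_table_thue_sols:
  "(\<lambda>(m, n). (thue_form m n, param_c (of_int m / of_int n))) ` set thue_sols = cycle_numer_table"
  unfolding cycle_numer_table_def by code_simp

lemma period3_pt_numer_in_table:
  assumes "period3_pt c x" "\<bar>numer x\<bar> \<in> set thue_rhs"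
  shows "(\<bar>numer x\<bar>, c) \<in> cycle_numer_table"
proof -
  define t where "t = x + fc c x"
  obtain m n where q: "quotient_of t = (m, n)" by (cases "quotient_of t")
  then have t: "t = of_int m / of_int n" and "n > 0" "coprime m n"
    by (simp_all add: quotient_of_div quotient_of_denom_pos quotient_of_coprime)
  have "t \<noteq> 0" "t \<noteq> -1" "x = param_x t"
    using period3_pt_eq_param_x[OF assms(1)] unfolding t_def by simp_all
  then have "m \<noteq> 0" "m + n \<noteq> 0"
    using \<open>n > 0\<close> unfolding t by (auto simp: add_eq_0_iff)
  then have numer: "\<bar>numer x\<bar> = \<bar>thue_form m n\<bar>"
    using numer_param_x[OF \<open>coprime m n\<close>] \<open>n > 0\<close> \<open>x = param_x t\<close> unfolding t by auto
  obtain m' n' where mn': "thue_form m' n' = \<bar>thue_form m n\<bar>" "of_int m' / of_int n' = t"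
  proof (cases "thue_form m n \<ge> 0")
    case False
    have "thue_form (- m) (- n) = - thue_form m n" by (simp add: thue_form_def)
    then show ?thesis using False that[of "- m" "- n"] unfolding t by simp
  qed (use that t in simp)
  then have "(m', n') \<in> set thue_sols" using assms(2) numer by (intro thue_solutions) simp
  moreover have "c = param_c t" using period3_pt_eq_param_c[OF assms(1)] unfolding t_def .
  ultimately show ?thesis
    using cycle_numer_table_thue_sols numer mn' by force
qed

lemma cycle_numer_in_orbit3:
  "period3_pt c x \<Longrightarrow> k \<in> numer ` orbit3 c x \<Longrightarrow> k \<in> S \<Longrightarrow> cycle_numer_in c S"
  unfolding cycle_numer_in_def by blast

lemma cycle_numer_table_realized:
  assumes "(k, c) \<in> cycle_numer_table"
  shows "cycle_numer_in c {k, - k}"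
proof -
  have "period3_pt (- 421 / 144) (- 11 / 12)" "numer ` orbit3 (- 421 / 144) (- 11 / 12) = {-11, -25, 17}"
    and "period3_pt (- 301 / 144) (19 / 12)" "numer ` orbit3 (- 301 / 144) (19 / 12) = {19, 5, -23}"
    and "period3_pt (- (337 * 673) / (360 ^ 2)) (- 19 / 360)"
        "numer ` orbit3 (- (337 * 673) / (360 ^ 2)) (- 19 / 360) = {-19, -629, 469}"
    and "period3_pt (- (43 ^ 2) / (24 ^ 2)) (23 / 24)"
        "numer ` orbit3 (- (43 ^ 2) / (24 ^ 2)) (23 / 24) = {23, -55, 49}"
    by code_simp+
  then show ?thesis using assms unfolding cycle_numer_table_def
    by (auto intro: cycle_numer_in_orbit3)
qed

lemma cycle_numer_in_iff_table:
  assumes "\<forall>k\<in>S. \<bar>k\<bar> \<in> set thue_rhs \<and> - k \<in> S"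
  shows "cycle_numer_in c S \<longleftrightarrow> (\<exists>k\<in>S. (\<bar>k\<bar>, c) \<in> cycle_numer_table)"
proof
  assume "cycle_numer_in c S"
  then obtain x y where "period3_pt c x" "y \<in> orbit3 c x" "numer y \<in> S"
    unfolding cycle_numer_in_def by blast
  then show "\<exists>k\<in>S. (\<bar>k\<bar>, c) \<in> cycle_numer_table"
    using assms period3_pt_orbit3 period3_pt_numer_in_table by blast
next
  assume "\<exists>k\<in>S. (\<bar>k\<bar>, c) \<in> cycle_numer_table"
  then obtain k where "k \<in> S" "(\<bar>k\<bar>, c) \<in> cycle_numer_table" by blast
  moreover have "{\<bar>k\<bar>, - \<bar>k\<bar>} \<subseteq> S" using assms \<open>k \<in> S\<close> by (cases "k \<ge> 0") auto
  ultimately show "cycle_numer_in c S"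
    using cycle_numer_table_realized unfolding cycle_numer_in_def by blast
qed

theorem theorem8:
  fixes c :: rat
  assumes "\<exists>x. period3_pt c x"
  shows "(cycle_numer_in c {11, -11, 17, -17, 25, -25} \<longleftrightarrow> c = - 421 / 144)
       \<and> (cycle_numer_in c {19, -19} \<longleftrightarrow> c = - 301 / 144 \<or> c = - (337 * 673) / (360 ^ 2))
       \<and> (cycle_numer_in c {23, -23} \<longleftrightarrow> c = - 301 / 144 \<or> c = - (43 ^ 2) / (24 ^ 2))"
  by (subst (1 2 3) cycle_numer_in_iff_table) (auto simp: cycle_numer_table_def thue_rhs_def)

end
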